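(* Let $F=f+\mu c$ with $\mu>0$, where $c:\mathbb{R}^n\to\mathbb{R}$ is convex and $f:\mathbb{R}^n\to\mathbb{R}$ is continuously differentiable with $L$-Lipschitz gradient and strongly convex with constant $L'>0$ (i.e. $(\nabla f(x)-\nabla f(y))^T(x-y)\ge L'\|x-y\|^2$). Let $\{x_k\}$ be generated by $x_{k+1}=x_k+\alpha_kd_k$, where $d_k=\mathscr{P}_c(x_k-\tau_k\nabla f(x_k),\mu\tau_k)-x_k\ne0$ with $0<\tau_{\min}\le\tau_k\le\tau_{\max}<\infty$, and where, for a fixed $\theta>0$ and every $k$, the step size $\alpha_k\in(0,1]$ satisfies $\nu(\alpha_k)|1-\lambda(\alpha_k)|\ge\theta$ and $F_{k+1}-R_k\ge-\frac{\alpha_k^2}{2}L\|d_k\|^2+\alpha_k\Delta_k$. Suppose $x_k\to x^*$, a minimizer of $F$. Then there exist constants $q\in(0,1)$ and $\xi_1,\xi_2,\xi_3>0$ such that for all $k$ $$F_k-F(x^* )\le\xi_1q^{2k},\qquad \|x_k-x^*\|\le\xi_2q^k,\qquad \|d_k\|\le\xi_3q^k .$$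
   Context: Notation: $h_k=h(x_k)$, $\nabla h_k=\nabla h(x_k)$; $\mathscr{P}_c(x,\vartheta)=\operatorname{argmin}_y\{\vartheta c(y)+\frac12\|x-y\|^2\}$ for $\vartheta>0$. $\Delta_k=d_k^T\nabla f_k+\mu(c(x_k+d_k)-c_k)$. Reference value: for an integer $N>0$, $m(0)=0$, $0\le m(k)\le\min\{m(k-1)+1,N-1\}$, $F_{l(k)}=\max_{0\le j\le m(k)}F_{k-j}$, and $R_k=\eta_kF_{l(k)}+(1-\eta_k)F_k$ with $\eta_k\in[0,1]$. Goldstein quotients: $\nu(\alpha_k)=\frac{F_{k+1}-F_k}{\alpha_k\Delta_k}$ and $\lambda(\alpha_k)=\frac{F_{k+1}-R_k}{\alpha_k\Delta_k}$. *)

theory Defs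
  imports "HOL-Analysis.Analysis"
begin

text \<open>Proximal operator: P_c(x, t) = argmin_y { t * c y + 1/2 * norm (x - y)^2 }.
  For convex finite-valued c and t > 0 the minimizer exists and is unique.\<close>
definition prox :: "('a::real_normed_vector \<Rightarrow> real) \<Rightarrow> 'a \<Rightarrow> real \<Rightarrow> 'a" where
  "prox c x t = (THE y. \<forall>z. t * c y + (1/2) * (norm (x - y))^2 \<le> t * c z + (1/2) * (norm (x - z))^2)"

definition Fmax_ref :: "(nat \<Rightarrow> real) \<Rightarrow> (nat \<Rightarrow> nat) \<Rightarrow> nat \<Rightarrow> real" where
  "Fmax_ref Fs m k = Max ((\<lambda>j. Fs (k - j)) ` {0..m k})"

end

theory Submission
  imports Defs
begin

text \<open>Strong convexity of \<open>f\<close> gives quadratic growth \<open>F y - F x\<^sup>* \<ge> L'/4 \<parallel>y - x\<^sup>*\<parallel>\<^sup>2\<close>.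
  The variational inequality characterising the proximal point yields, for the model decrease
  \<open>D\<^sub>k = -\<Delta>\<^sub>k\<close>, both sufficient descent \<open>\<parallel>d\<^sub>k\<parallel>\<^sup>2 \<le> \<tau>\<^sub>k D\<^sub>k\<close> and an error bound
  \<open>F\<^sub>k - F\<^sup>* \<le> C D\<^sub>k\<close>. Combined with the descent lemma, the Goldstein conditions keep
  \<open>\<alpha>\<^sub>k \<nu>(\<alpha>\<^sub>k)\<close> away from zero, so \<open>F\<^sub>k\<^sub>+\<^sub>1 - F\<^sup>* \<le> F\<^sub>k - F\<^sup>* - \<kappa> D\<^sub>k \<le> (1 - \<kappa>/C)(F\<^sub>k - F\<^sup>*)\<close>.
  The bounds on \<open>\<parallel>x\<^sub>k - x\<^sup>*\<parallel>\<close> and \<open>\<parallel>d\<^sub>k\<parallel>\<close> then follow from quadratic growth and from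
  \<open>\<kappa> D\<^sub>k \<le> F\<^sub>k - F\<^sup>*\<close>.\<close>

lemma has_real_derivative_along_line:
  fixes f :: "'a::real_inner \<Rightarrow> real"
  assumes f_grad: "\<And>y. (f has_derivative (\<lambda>h. gf y \<bullet> h)) (at y)"
  shows "((\<lambda>t. f (x + t *\<^sub>R h)) has_real_derivative (gf (x + t *\<^sub>R h) \<bullet> h)) (at t)"
proof -
  have "((\<lambda>t. x + t *\<^sub>R h) has_derivative (\<lambda>s. s *\<^sub>R h)) (at t)"
    by (auto intro!: derivative_eq_intros)
  from has_derivative_compose[OF this f_grad]
  have "((\<lambda>t. f (x + t *\<^sub>R h)) has_derivative (\<lambda>s. gf (x + t *\<^sub>R h) \<bullet> (s *\<^sub>R h))) (at t)" .
  moreover have "(\<lambda>s. gf (x + t *\<^sub>R h) \<bullet> (s *\<^sub>R h)) = (*) (gf (x + t *\<^sub>R h) \<bullet> h)"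
    by (rule ext) (simp add: mult.commute)
  ultimately show ?thesis
    unfolding has_field_derivative_def by simp
qed

lemma strongly_monotone_gradient_lower_bound:
  fixes f :: "'a::real_inner \<Rightarrow> real"
  assumes f_grad: "\<And>y. (f has_derivative (\<lambda>h. gf y \<bullet> h)) (at y)"
    and strong: "\<And>y z. L' * (norm (y - z))^2 \<le> (gf y - gf z) \<bullet> (y - z)"
  shows "f x + gf x \<bullet> h + L'/2 * (norm h)^2 \<le> f (x + h)"
proof -
  define \<phi> where "\<phi> t = f (x + t *\<^sub>R h) - t * (gf x \<bullet> h) - L' * t^2 / 2 * (norm h)^2" for t
  have "\<phi> 0 \<le> \<phi> 1"
  proof (rule DERIV_nonneg_imp_nondecreasing[of 0 1 \<phi>])
    fix t :: real
    assume t: "0 \<le> t" "t \<le> 1"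
    have deriv: "(\<phi> has_real_derivative (gf (x + t *\<^sub>R h) \<bullet> h - gf x \<bullet> h - L' * t * (norm h)^2)) (at t)"
      unfolding \<phi>_def
      by (auto intro!: derivative_eq_intros has_real_derivative_along_line[OF f_grad]
          simp: power2_eq_square)
    have "t * (L' * t * (norm h)^2) \<le> t * ((gf (x + t *\<^sub>R h) - gf x) \<bullet> h)"
      using strong[of "x + t *\<^sub>R h" x] by (simp add: power2_eq_square algebra_simps)
    then have "L' * t * (norm h)^2 \<le> (gf (x + t *\<^sub>R h) - gf x) \<bullet> h" if "t > 0"
      using that by simp
    then have "0 \<le> gf (x + t *\<^sub>R h) \<bullet> h - gf x \<bullet> h - L' * t * (norm h)^2"
      using t by (cases "t = 0") (auto simp: inner_diff_left)
    with deriv show "\<exists>y. (\<phi> has_real_derivative y) (at t) \<and> 0 \<le> y" by blast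
  qed simp
  then show ?thesis
    unfolding \<phi>_def by simp
qed

lemma lipschitz_gradient_upper_bound:
  fixes f :: "'a::real_inner \<Rightarrow> real"
  assumes f_grad: "\<And>y. (f has_derivative (\<lambda>h. gf y \<bullet> h)) (at y)"
    and lipschitz: "\<And>y z. norm (gf y - gf z) \<le> L * norm (y - z)"
  shows "f (x + h) \<le> f x + gf x \<bullet> h + L/2 * (norm h)^2"
proof -
  define \<phi> where "\<phi> t = f (x + t *\<^sub>R h) - t * (gf x \<bullet> h) - L * t^2 / 2 * (norm h)^2" for t
  have "\<phi> 1 \<le> \<phi> 0"
  proof (rule DERIV_nonpos_imp_nonincreasing[of 0 1 \<phi>])
    fix t :: real
    assume t: "0 \<le> t" "t \<le> 1"
    have deriv: "(\<phi> has_real_derivative (gf (x + t *\<^sub>R h) \<bullet> h - gf x \<bullet> h - L * t * (norm h)^2)) (at t)"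
      unfolding \<phi>_def
      by (auto intro!: derivative_eq_intros has_real_derivative_along_line[OF f_grad]
          simp: power2_eq_square)
    have "(gf (x + t *\<^sub>R h) - gf x) \<bullet> h \<le> norm (gf (x + t *\<^sub>R h) - gf x) * norm h"
      by (rule norm_cauchy_schwarz)
    also have "\<dots> \<le> (L * norm (t *\<^sub>R h)) * norm h"
      using lipschitz[of "x + t *\<^sub>R h" x] by (simp add: mult_right_mono)
    also have "\<dots> = L * t * (norm h)^2"
      using t by (simp add: power2_eq_square)
    finally have "gf (x + t *\<^sub>R h) \<bullet> h - gf x \<bullet> h - L * t * (norm h)^2 \<le> 0"
      by (simp add: inner_diff_left)
    with deriv show "\<exists>y. (\<phi> has_real_derivative y) (at t) \<and> y \<le> 0" by blast
  qed simp
  then show ?thesis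
    unfolding \<phi>_def by simp
qed

lemma strongly_monotone_gradient_midpoint:
  fixes f :: "'a::real_inner \<Rightarrow> real"
  assumes f_grad: "\<And>y. (f has_derivative (\<lambda>h. gf y \<bullet> h)) (at y)"
    and strong: "\<And>y z. L' * (norm (y - z))^2 \<le> (gf y - gf z) \<bullet> (y - z)"
  shows "2 * f (midpoint y w) + L'/4 * (norm (y - w))^2 \<le> f y + f w"
proof -
  define h where "h = (1/2) *\<^sub>R (y - w)"
  have y: "y = midpoint y w + h" and w: "w = midpoint y w + - h"
    unfolding h_def midpoint_def by (simp_all add: algebra_simps flip: scaleR_add_left)
  have "f (midpoint y w) + gf (midpoint y w) \<bullet> h + L'/2 * (norm h)^2 \<le> f y"
    using strongly_monotone_gradient_lower_bound[OF f_grad strong, of "midpoint y w" h] y by simp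
  moreover have "f (midpoint y w) + gf (midpoint y w) \<bullet> - h + L'/2 * (norm (- h))^2 \<le> f w"
    using strongly_monotone_gradient_lower_bound[OF f_grad strong, of "midpoint y w" "- h"] w
    by simp
  moreover have "(norm h)^2 = (norm (y - w))^2 / 4"
    unfolding h_def by (simp add: power2_eq_square)
  ultimately show ?thesis by simp
qed

lemma convex_on_midpoint:
  assumes "convex_on UNIV c"
  shows "2 * c (midpoint y w) \<le> c y + c w"
  using convex_onD[OF assms, of "1/2" y w] by (simp add: midpoint_def scaleR_add_right)

lemma convex_on_lower_bound_away_from:
  fixes c :: "'a::euclidean_space \<Rightarrow> real"
  assumes convex: "convex_on UNIV c"
  obtains K where "0 \<le> K" "\<And>w. 1 \<le> norm (w - z) \<Longrightarrow> c z - K * norm (w - z) \<le> c w"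
proof -
  have cont: "continuous_on (sphere z 1) c"
    using convex_on_continuous[OF open_UNIV convex] continuous_on_subset by blast
  obtain b :: 'a where "b \<in> Basis" using nonempty_Basis by blast
  then have "z + b \<in> sphere z 1" by (simp add: dist_norm)
  then obtain u0 where u0: "\<And>u. u \<in> sphere z 1 \<Longrightarrow> c u0 \<le> c u"
    using continuous_attains_inf[OF compact_sphere _ cont] by blast
  have "c z - \<bar>c z - c u0\<bar> * norm (w - z) \<le> c w" if w: "1 \<le> norm (w - z)" for w
  proof -
    define s where "s = norm (w - z)"
    have s: "1 \<le> s" using w unfolding s_def .
    define u where "u = (1 - 1/s) *\<^sub>R z + (1/s) *\<^sub>R w"
    have "u - z = (1/s) *\<^sub>R (w - z)"
      unfolding u_def by (simp add: algebra_simps)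
    moreover have "w \<noteq> z" using s unfolding s_def by auto
    ultimately have "u \<in> sphere z 1"
      using s by (simp add: dist_norm norm_minus_commute s_def)
    then have "c u0 \<le> c u" by (rule u0)
    also have "c u \<le> (1 - 1/s) * c z + (1/s) * c w"
      unfolding u_def using s by (intro convex_onD[OF convex]) auto
    finally have "s * c u0 \<le> s * ((1 - 1/s) * c z + (1/s) * c w)"
      using s by simp
    then have "c z - s * (c z - c u0) \<le> c w"
      using s by (simp add: algebra_simps)
    moreover have "s * (c z - c u0) \<le> \<bar>c z - c u0\<bar> * s"
      using s by (simp add: mult.commute mult_right_mono)
    ultimately show ?thesis unfolding s_def by simp
  qed
  then show ?thesis using that[of "\<bar>c z - c u0\<bar>"] by simp
qed

text \<open>The proximal objective grows quadratically while the convex term decreases at most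
  linearly, so the minimum is attained on a ball around \<open>z\<close>.\<close>
lemma prox_objective_has_minimizer:
  fixes c :: "'a::euclidean_space \<Rightarrow> real"
  assumes convex: "convex_on UNIV c" and t: "0 < t"
  shows "\<exists>y. \<forall>w. t * c y + 1/2 * (norm (z - y))^2 \<le> t * c w + 1/2 * (norm (z - w))^2"
proof -
  define g where "g w = t * c w + 1/2 * (norm (z - w))^2" for w
  obtain K where K: "0 \<le> K" "\<And>w. 1 \<le> norm (w - z) \<Longrightarrow> c z - K * norm (w - z) \<le> c w"
    using convex_on_lower_bound_away_from[OF convex] by blast
  define r where "r = max 1 (2 * t * K)"
  have far: "g z < g w" if w: "r < norm (z - w)" for w
  proof -
    define s where "s = norm (z - w)"
    have s: "1 < s" "2 * t * K < s" using w unfolding r_def s_def by auto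
    have "t * (c z - K * s) \<le> t * c w"
      using K(2)[of w] s t by (simp add: norm_minus_commute s_def)
    moreover have "t * K * s < s^2 / 2"
      using s by (simp add: power2_eq_square)
    ultimately show ?thesis
      unfolding g_def s_def[symmetric] by (simp add: algebra_simps)
  qed
  have cont: "continuous_on (cball z r) g"
    unfolding g_def using convex_on_continuous[OF open_UNIV convex]
    by (intro continuous_intros) (auto intro: continuous_on_subset)
  have "z \<in> cball z r" unfolding r_def by simp
  then obtain y where y: "y \<in> cball z r" "\<And>w. w \<in> cball z r \<Longrightarrow> g y \<le> g w"
    using continuous_attains_inf[OF compact_cball _ cont] by blast
  have "g y \<le> g w" for w
  proof (cases "norm (z - w) \<le> r")
    case True
    then show ?thesis using y(2) by (simp add: dist_norm)
  next
    case False
    then have "g z < g w" using far by simp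
    moreover have "g y \<le> g z" using y(2) \<open>z \<in> cball z r\<close> .
    ultimately show ?thesis by simp
  qed
  then show ?thesis unfolding g_def by blast
qed

lemma norm_diff_scaleR_power2:
  fixes e v :: "'a::real_inner"
  shows "(norm (e - s *\<^sub>R v))^2 = (norm e)^2 - 2 * s * (e \<bullet> v) + s^2 * (norm v)^2"
  unfolding power2_norm_eq_inner
  by (simp add: inner_diff_left inner_diff_right inner_commute[of v e] algebra_simps
      power2_eq_square)

lemma prox_objective_minimizer_variational_inequality:
  fixes c :: "'a::real_inner \<Rightarrow> real"
  assumes convex: "convex_on UNIV c" and t: "0 \<le> t"
    and min: "\<And>w. t * c y + 1/2 * (norm (z - y))^2 \<le> t * c w + 1/2 * (norm (z - w))^2"
  shows "(z - y) \<bullet> (w - y) \<le> t * (c w - c y)"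
proof -
  define v where "v = w - y"
  define \<delta> where "\<delta> = (z - y) \<bullet> v - t * (c w - c y)"
  have small: "\<delta> \<le> s/2 * (norm v)^2" if s: "0 < s" "s \<le> 1" for s
  proof -
    have "t * c y + 1/2 * (norm (z - y))^2
        \<le> t * c ((1 - s) *\<^sub>R y + s *\<^sub>R w) + 1/2 * (norm ((z - y) - s *\<^sub>R v))^2"
      using min[of "(1 - s) *\<^sub>R y + s *\<^sub>R w"] by (simp add: v_def algebra_simps)
    also have "t * c ((1 - s) *\<^sub>R y + s *\<^sub>R w) \<le> t * ((1 - s) * c y + s * c w)"
      using s t by (intro mult_left_mono convex_onD[OF convex]) auto
    also have "(norm ((z - y) - s *\<^sub>R v))^2
        = (norm (z - y))^2 - 2 * s * ((z - y) \<bullet> v) + s^2 * (norm v)^2"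
      by (rule norm_diff_scaleR_power2)
    finally have "0 \<le> s * (s/2 * (norm v)^2 - \<delta>)"
      unfolding \<delta>_def by (simp add: algebra_simps power2_eq_square)
    then show ?thesis using s by (simp add: zero_le_mult_iff)
  qed
  have "\<delta> \<le> 0"
  proof (rule ccontr)
    assume "\<not> \<delta> \<le> 0"
    define s where "s = min 1 (\<delta> / ((norm v)^2 + 1))"
    have pos: "0 < (norm v)^2 + 1" by (simp add: add_nonneg_pos)
    then have s: "0 < s" "s \<le> 1" unfolding s_def using \<open>\<not> \<delta> \<le> 0\<close> by auto
    have "s * (norm v)^2 \<le> \<delta> / ((norm v)^2 + 1) * ((norm v)^2 + 1)"
      unfolding s_def using pos \<open>\<not> \<delta> \<le> 0\<close> by (intro mult_mono) auto
    then have "s/2 * (norm v)^2 < \<delta>"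
      using pos \<open>\<not> \<delta> \<le> 0\<close> by simp
    with small[OF s] show False by simp
  qed
  then show ?thesis unfolding \<delta>_def v_def by simp
qed

lemma prox_objective_minimizer_unique:
  fixes c :: "'a::real_inner \<Rightarrow> real"
  assumes convex: "convex_on UNIV c" and t: "0 \<le> t"
    and min1: "\<And>w. t * c y1 + 1/2 * (norm (z - y1))^2 \<le> t * c w + 1/2 * (norm (z - w))^2"
    and min2: "\<And>w. t * c y2 + 1/2 * (norm (z - y2))^2 \<le> t * c w + 1/2 * (norm (z - w))^2"
  shows "y1 = y2"
proof -
  have "(z - y1) \<bullet> (y2 - y1) + (z - y2) \<bullet> (y1 - y2) \<le> 0"
    using prox_objective_minimizer_variational_inequality[OF convex t min1, of y2]
      prox_objective_minimizer_variational_inequality[OF convex t min2, of y1]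
    by (simp add: right_diff_distrib)
  then have "(y2 - y1) \<bullet> (y2 - y1) \<le> 0"
    by (simp add: inner_diff_left inner_diff_right inner_commute algebra_simps)
  then show ?thesis
    by (metis eq_iff_diff_eq_0 inner_eq_zero_iff inner_ge_zero order_antisym)
qed

lemma prox_minimizes:
  fixes c :: "'a::euclidean_space \<Rightarrow> real"
  assumes convex: "convex_on UNIV c" and t: "0 < t"
  shows "t * c (prox c z t) + 1/2 * (norm (z - prox c z t))^2 \<le> t * c w + 1/2 * (norm (z - w))^2"
proof -
  have "\<exists>!y. \<forall>w. t * c y + 1/2 * (norm (z - y))^2 \<le> t * c w + 1/2 * (norm (z - w))^2"
    using prox_objective_has_minimizer[OF convex t]
      prox_objective_minimizer_unique[OF convex less_imp_le[OF t]] by blast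
  from theI'[OF this] show ?thesis unfolding prox_def by simp
qed

lemma prox_variational_inequality:
  fixes c :: "'a::euclidean_space \<Rightarrow> real"
  assumes "convex_on UNIV c" and "0 < t"
  shows "(z - prox c z t) \<bullet> (w - prox c z t) \<le> t * (c w - c (prox c z t))"
  using assms by (intro prox_objective_minimizer_variational_inequality prox_minimizes) auto

text \<open>With \<open>\<nu>\<close> and \<open>lam\<close> the Goldstein quotients, \<open>u\<close> measures how far the
  curvature term pushes them away from \<open>1\<close>; since \<open>u = O(\<alpha>)\<close>, the Goldstein condition
  \<open>\<nu> \<bar>1 - lam\<bar> \<ge> \<theta>\<close> forces the accepted step size to be bounded below.\<close>
lemma goldstein_quotients_bound:
  fixes \<alpha> \<theta> P u \<nu> lam :: real
  assumes \<alpha>: "0 < \<alpha>" "\<alpha> \<le> 1" and "0 < \<theta>" "0 \<le> P" "0 \<le> u" "u \<le> \<alpha> * P"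
    and \<nu>: "1 - u \<le> \<nu>" and lam: "lam \<le> 1 + u" and "\<nu> \<le> lam"
    and goldstein: "\<theta> \<le> \<nu> * \<bar>1 - lam\<bar>"
  shows "\<theta>^2 / (1 + P)^3 \<le> \<nu> * \<alpha>"
proof -
  have \<nu>_pos: "0 < \<nu>"
    using goldstein \<open>0 < \<theta>\<close> by (smt (verit) mult_nonpos_nonneg abs_ge_zero)
  have dist: "\<bar>1 - lam\<bar> \<le> u"
    using \<nu> lam \<open>\<nu> \<le> lam\<close> by (auto simp: abs_if)
  have "\<alpha> * P \<le> P"
    using \<open>0 \<le> P\<close> \<alpha> by (intro mult_left_le_one_le) auto
  then have u_le: "u \<le> P"
    using \<open>u \<le> \<alpha> * P\<close> by linarith
  have \<nu>_le: "\<nu> \<le> 1 + P"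
    using \<open>\<nu> \<le> lam\<close> lam u_le by linarith
  have "u \<le> \<alpha> * (1 + P)"
    using \<open>u \<le> \<alpha> * P\<close> \<alpha> by (simp add: algebra_simps)
  have "\<theta> \<le> \<nu> * u"
    using goldstein dist \<nu>_pos by (smt (verit) mult_left_mono)
  also have "\<dots> \<le> (1 + P) * (\<alpha> * (1 + P))"
    using \<nu>_le \<open>u \<le> \<alpha> * (1 + P)\<close> \<open>0 \<le> u\<close> \<open>0 \<le> P\<close> by (intro mult_mono) auto
  finally have \<theta>_\<alpha>: "\<theta> \<le> \<alpha> * (1 + P)^2"
    by (simp add: power2_eq_square algebra_simps)
  have "\<theta> \<le> \<nu> * (1 + P)"
    using goldstein dist u_le \<nu>_pos by (smt (verit) mult_left_mono)
  then have "\<theta> * \<theta> \<le> (\<nu> * (1 + P)) * (\<alpha> * (1 + P)^2)"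
    using \<theta>_\<alpha> \<open>0 < \<theta>\<close> by (intro mult_mono) auto
  then have "\<theta>^2 \<le> (\<nu> * \<alpha>) * (1 + P)^3"
    by (simp add: power2_eq_square power3_eq_cube algebra_simps)
  then show ?thesis
    using \<open>0 \<le> P\<close> by (simp add: divide_simps)
qed

text \<open>Here \<open>A\<close> and \<open>B\<close> are the decreases of the objective relative to the current value and
  to the reference value, \<open>\<Delta> < 0\<close> is the model decrease and \<open>n\<close> stands for \<open>\<parallel>d\<parallel>\<^sup>2\<close>.\<close>
lemma goldstein_sufficient_decrease:
  fixes A B \<Delta> \<alpha> \<theta> T L n :: real
  assumes \<alpha>: "0 < \<alpha>" "\<alpha> \<le> 1" and "0 < \<theta>" "0 \<le> T" "0 \<le> L" "\<Delta> < 0" "0 \<le> n"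
    and model: "A \<le> \<alpha> * \<Delta> + L * \<alpha>^2 / 2 * n"
    and n: "n \<le> - T * \<Delta>"
    and "B \<le> A"
    and goldstein: "\<theta> \<le> A / (\<alpha> * \<Delta>) * \<bar>1 - B / (\<alpha> * \<Delta>)\<bar>"
    and curvature: "- (\<alpha>^2 / 2) * L * n + \<alpha> * \<Delta> \<le> B"
  shows "A \<le> \<theta>^2 / (1 + L * T / 2)^3 * \<Delta>"
proof -
  define u where "u = L * \<alpha> * n / (2 * - \<Delta>)"
  have \<alpha>\<Delta>: "\<alpha> * \<Delta> < 0"
    using \<alpha> \<open>\<Delta> < 0\<close> by (simp add: mult_pos_neg)
  have u_curv: "u * (\<alpha> * \<Delta>) = - (L * \<alpha>^2 / 2 * n)"
    unfolding u_def using \<open>\<Delta> < 0\<close> by (simp add: field_simps power2_eq_square)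
  have "0 \<le> u"
    unfolding u_def using \<alpha> \<open>0 \<le> L\<close> \<open>0 \<le> n\<close> \<open>\<Delta> < 0\<close> by (simp add: divide_nonneg_neg)
  have "L * \<alpha> * n \<le> L * \<alpha> * (- T * \<Delta>)"
    using n \<alpha> \<open>0 \<le> L\<close> by (intro mult_left_mono) auto
  then have "u \<le> \<alpha> * (L * T / 2)"
    unfolding u_def using \<open>\<Delta> < 0\<close> by (simp add: divide_simps algebra_simps)
  moreover have "1 - u \<le> A / (\<alpha> * \<Delta>)"
  proof -
    have "A \<le> (1 - u) * (\<alpha> * \<Delta>)"
      using model u_curv by (simp add: left_diff_distrib)
    with \<alpha>\<Delta> show ?thesis by (simp add: neg_le_divide_eq)
  qed
  moreover have "B / (\<alpha> * \<Delta>) \<le> 1 + u"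
  proof -
    have "(1 + u) * (\<alpha> * \<Delta>) = \<alpha> * \<Delta> - (\<alpha>^2 / 2) * L * n"
      using u_curv by (simp add: distrib_right)
    then have "(1 + u) * (\<alpha> * \<Delta>) \<le> B"
      using curvature by linarith
    with \<alpha>\<Delta> show ?thesis by (simp add: neg_divide_le_eq)
  qed
  moreover have "A / (\<alpha> * \<Delta>) \<le> B / (\<alpha> * \<Delta>)"
    using \<open>B \<le> A\<close> \<alpha>\<Delta> by (simp add: divide_right_mono_neg)
  ultimately have \<kappa>: "\<theta>^2 / (1 + L * T / 2)^3 \<le> A / (\<alpha> * \<Delta>) * \<alpha>"
    using goldstein_quotients_bound[OF \<alpha> \<open>0 < \<theta>\<close> _ \<open>0 \<le> u\<close> _ _ _ _ goldstein]
      \<open>0 \<le> T\<close> \<open>0 \<le> L\<close> by simp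
  have "A = A / (\<alpha> * \<Delta>) * \<alpha> * \<Delta>"
    using \<alpha> \<open>\<Delta> < 0\<close> by simp
  also have "\<dots> \<le> \<theta>^2 / (1 + L * T / 2)^3 * \<Delta>"
    using mult_right_mono_neg[OF \<kappa>, of \<Delta>] \<open>\<Delta> < 0\<close> by simp
  finally show ?thesis .
qed

text \<open>Weighted AM-GM: \<open>2ab \<le> s a\<^sup>2 + b\<^sup>2/s\<close> with \<open>s = tL'/4\<close>, so the cross term
  \<open>\<parallel>d\<parallel> \<parallel>x - x\<^sup>*\<parallel>\<close> is absorbed into \<open>E/2\<close> and a multiple of \<open>D\<close>.\<close>
lemma error_bound_from_cross_term:
  fixes t L' E D a b :: real
  assumes "0 < t" "0 < L'"
    and cross: "t * E \<le> t * D + a * b"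
    and a: "a^2 \<le> 4 / L' * E" and b: "b^2 \<le> t * D"
  shows "E \<le> (2 + 4 / (t * L')) * D"
proof -
  define s where "s = t * L' / 4"
  have s: "0 < s" unfolding s_def using assms by simp
  have "2 * s * (a * b) \<le> s^2 * a^2 + b^2"
    using sum_squares_ge_zero[of "s * a - b" 0]
    by (simp add: power2_eq_square algebra_simps)
  also have "\<dots> \<le> s^2 * (4 / L' * E) + t * D"
    using a b by (intro add_mono mult_left_mono) auto
  also have "s^2 * (4 / L' * E) = s * t * E"
    unfolding s_def using \<open>0 < L'\<close> by (simp add: power2_eq_square field_simps)
  finally have "2 * s * (t * E) \<le> 2 * s * (t * D) + s * t * E + t * D"
    using mult_left_mono[OF cross, of "2 * s"] s by (simp add: algebra_simps)
  then have "t * (s * E) \<le> t * (2 * s * D + D)"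
    by (simp add: algebra_simps)
  then have "s * E \<le> 2 * s * D + D"
    using \<open>0 < t\<close> by simp
  then show ?thesis
    unfolding s_def using \<open>0 < t\<close> \<open>0 < L'\<close> by (simp add: field_simps)
qed

lemma geometric_decay_of_sufficient_decrease:
  fixes E D :: "nat \<Rightarrow> real"
  assumes "0 < \<kappa>" "0 < C"
    and nonneg: "\<And>k. 0 \<le> E k"
    and error: "\<And>k. E k \<le> C * D k"
    and decrease: "\<And>k. E (Suc k) \<le> E k - \<kappa> * D k"
  obtains r where "0 < r" "r < 1" "\<And>k. E k \<le> E 0 * r ^ k"
proof -
  define r where "r = max (1 - \<kappa> / C) (1/2)"
  have r: "0 < r" "r < 1"
    unfolding r_def using assms by auto
  have step: "E (Suc k) \<le> r * E k" for k
  proof -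
    have "\<kappa> / C * E k \<le> \<kappa> * D k"
      using mult_left_mono[OF error[of k], of \<kappa>] assms by (simp add: field_simps)
    then have "E (Suc k) \<le> (1 - \<kappa> / C) * E k"
      using decrease[of k] by (simp add: algebra_simps)
    also have "\<dots> \<le> r * E k"
      unfolding r_def using nonneg[of k] by (intro mult_right_mono) auto
    finally show ?thesis .
  qed
  have "E k \<le> E 0 * r ^ k" for k
  proof (induction k)
    case (Suc k)
    have "E (Suc k) \<le> r * E k" by (rule step)
    also have "\<dots> \<le> r * (E 0 * r ^ k)"
      using Suc r by (intro mult_left_mono) auto
    finally show ?case by (simp add: algebra_simps)
  qed simp
  with r that show ?thesis by blast
qed

lemma le_sqrt_mult_power_if_square_le:
  fixes a K r :: real
  assumes "0 \<le> r" "a^2 \<le> K * r ^ k"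
  shows "a \<le> sqrt K * sqrt r ^ k"
proof -
  have "a \<le> sqrt (a^2)" by simp
  also have "\<dots> \<le> sqrt (K * r ^ k)"
    using assms(2) by (rule real_sqrt_le_mono)
  finally show ?thesis
    by (simp add: real_sqrt_mult real_sqrt_power)
qed

lemma r_linear_rates_of_sufficient_decrease:
  fixes E D a b :: "nat \<Rightarrow> real"
  assumes "0 < \<kappa>" "0 < C" "0 < A" "0 < B"
    and nonneg: "\<And>k. 0 \<le> E k"
    and error: "\<And>k. E k \<le> C * D k"
    and decrease: "\<And>k. E (Suc k) \<le> E k - \<kappa> * D k"
    and a: "\<And>k. (a k)^2 \<le> A * E k"
    and b: "\<And>k. (b k)^2 \<le> B * D k"
  shows "\<exists>q \<xi>1 \<xi>2 \<xi>3. 0 < q \<and> q < 1 \<and> 0 < \<xi>1 \<and> 0 < \<xi>2 \<and> 0 < \<xi>3 \<and>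
           (\<forall>k. E k \<le> \<xi>1 * q ^ (2 * k) \<and> a k \<le> \<xi>2 * q ^ k \<and> b k \<le> \<xi>3 * q ^ k)"
proof -
  obtain r where r: "0 < r" "r < 1" and E_le: "\<And>k. E k \<le> E 0 * r ^ k"
    using geometric_decay_of_sufficient_decrease[of \<kappa> C E D, OF \<open>0 < \<kappa>\<close> \<open>0 < C\<close> nonneg
        error decrease] by blast
  define \<xi>1 where "\<xi>1 = E 0 + 1"
  have \<xi>1: "0 < \<xi>1" unfolding \<xi>1_def using nonneg[of 0] by simp
  have E_\<xi>1: "E k \<le> \<xi>1 * r ^ k" for k
  proof -
    have "E 0 * r ^ k \<le> \<xi>1 * r ^ k"
      unfolding \<xi>1_def using r by (intro mult_right_mono) auto
    then show ?thesis using E_le[of k] by linarith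
  qed
  have "(a k)^2 \<le> A * \<xi>1 * r ^ k" for k
  proof -
    have "A * E k \<le> A * (\<xi>1 * r ^ k)"
      using E_\<xi>1[of k] \<open>0 < A\<close> by simp
    then show ?thesis using a[of k] by (simp add: mult.assoc)
  qed
  then have a_le: "a k \<le> sqrt (A * \<xi>1) * sqrt r ^ k" for k
    using r by (intro le_sqrt_mult_power_if_square_le) auto
  have "(b k)^2 \<le> B * \<xi>1 / \<kappa> * r ^ k" for k
  proof -
    have "\<kappa> * D k \<le> \<xi>1 * r ^ k"
      using decrease[of k] nonneg[of "Suc k"] E_\<xi>1[of k] by linarith
    then have "B * D k \<le> B * (\<xi>1 / \<kappa> * r ^ k)"
      using \<open>0 < \<kappa>\<close> \<open>0 < B\<close> by (simp add: field_simps)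
    then show ?thesis using b[of k] by simp
  qed
  then have b_le: "b k \<le> sqrt (B * \<xi>1 / \<kappa>) * sqrt r ^ k" for k
    using r by (intro le_sqrt_mult_power_if_square_le) auto
  have "sqrt r ^ (2 * k) = r ^ k" for k
    using r by (simp add: power_mult)
  then show ?thesis
    using r \<xi>1 E_\<xi>1 a_le b_le assms(1-4)
    by (intro exI[of _ "sqrt r"] exI[of _ \<xi>1] exI[of _ "sqrt (A * \<xi>1)"]
        exI[of _ "sqrt (B * \<xi>1 / \<kappa>)"]) auto
qed

lemma le_reference_value:
  assumes "0 \<le> \<eta>" "\<eta> \<le> 1"
  shows "Fs k \<le> \<eta> * Fmax_ref Fs m k + (1 - \<eta>) * Fs k"
proof -
  have "Fs k \<le> Fmax_ref Fs m k"
    unfolding Fmax_ref_def by (rule Max_ge) (auto intro: image_eqI[where x = 0])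
  then have "\<eta> * Fs k \<le> \<eta> * Fmax_ref Fs m k"
    using assms by (intro mult_left_mono) auto
  then show ?thesis by (simp add: algebra_simps)
qed

locale composite_objective =
  fixes f c :: "'a::euclidean_space \<Rightarrow> real" and gf :: "'a \<Rightarrow> 'a" and \<mu> L L' :: real
  assumes mu_pos: "0 < \<mu>"
    and c_convex: "convex_on UNIV c"
    and f_grad: "\<And>y. (f has_derivative (\<lambda>h. gf y \<bullet> h)) (at y)"
    and gf_lipschitz: "\<And>y z. norm (gf y - gf z) \<le> L * norm (y - z)"
    and L'_pos: "0 < L'"
    and gf_strongly_monotone: "\<And>y z. L' * (norm (y - z))^2 \<le> (gf y - gf z) \<bullet> (y - z)"
begin

definition F :: "'a \<Rightarrow> real" where
  "F y = f y + \<mu> * c y"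

definition Delta :: "'a \<Rightarrow> 'a \<Rightarrow> real" where
  "Delta x d = d \<bullet> gf x + \<mu> * (c (x + d) - c x)"

lemma L_nonneg: "0 \<le> L"
proof -
  obtain b :: 'a where b: "b \<in> Basis" using nonempty_Basis by blast
  have "0 \<le> L * norm (b - 0)"
    using gf_lipschitz[of b 0] norm_ge_zero order_trans by blast
  then show ?thesis using b by simp
qed

lemma quadratic_growth:
  assumes min: "\<And>y. F xs \<le> F y"
  shows "L'/4 * (norm (y - xs))^2 \<le> F y - F xs"
proof -
  have "2 * f (midpoint y xs) + L'/4 * (norm (y - xs))^2 \<le> f y + f xs"
    by (rule strongly_monotone_gradient_midpoint[OF f_grad gf_strongly_monotone])
  moreover have "\<mu> * (2 * c (midpoint y xs)) \<le> \<mu> * (c y + c xs)"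
    using convex_on_midpoint[OF c_convex] mu_pos by (intro mult_left_mono) auto
  moreover have "F xs \<le> F (midpoint y xs)" by (rule min)
  ultimately show ?thesis
    unfolding F_def by (simp add: algebra_simps)
qed

lemma model_decrease:
  assumes "0 \<le> \<alpha>" "\<alpha> \<le> 1"
  shows "F (x + \<alpha> *\<^sub>R d) - F x \<le> \<alpha> * Delta x d + L * \<alpha>^2 / 2 * (norm d)^2"
proof -
  have "f (x + \<alpha> *\<^sub>R d) \<le> f x + gf x \<bullet> (\<alpha> *\<^sub>R d) + L/2 * (norm (\<alpha> *\<^sub>R d))^2"
    by (rule lipschitz_gradient_upper_bound[OF f_grad gf_lipschitz])
  also have "\<dots> = f x + \<alpha> * (d \<bullet> gf x) + L * \<alpha>^2 / 2 * (norm d)^2"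
    using assms by (simp add: inner_commute power_mult_distrib)
  finally have f_le: "f (x + \<alpha> *\<^sub>R d) \<le> f x + \<alpha> * (d \<bullet> gf x) + L * \<alpha>^2 / 2 * (norm d)^2" .
  have "x + \<alpha> *\<^sub>R d = (1 - \<alpha>) *\<^sub>R x + \<alpha> *\<^sub>R (x + d)"
    by (simp add: algebra_simps)
  then have "c (x + \<alpha> *\<^sub>R d) \<le> (1 - \<alpha>) * c x + \<alpha> * c (x + d)"
    using assms by (simp add: convex_onD[OF c_convex])
  then have "\<mu> * c (x + \<alpha> *\<^sub>R d) \<le> \<mu> * ((1 - \<alpha>) * c x + \<alpha> * c (x + d))"
    using mu_pos by (intro mult_left_mono) auto
  with f_le show ?thesis
    unfolding F_def Delta_def by (simp add: algebra_simps)
qed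

lemma prox_step_variational_inequality:
  assumes "0 < t" and d: "d = prox c (x - t *\<^sub>R gf x) (\<mu> * t) - x"
  shows "(- t *\<^sub>R gf x - d) \<bullet> (w - (x + d)) \<le> \<mu> * t * (c w - c (x + d))"
proof -
  define z where "z = x - t *\<^sub>R gf x"
  have "x + d = prox c z (\<mu> * t)"
    using d unfolding z_def by simp
  moreover have "- t *\<^sub>R gf x - d = z - prox c z (\<mu> * t)"
    using d unfolding z_def by simp
  moreover have "0 < \<mu> * t"
    using mu_pos \<open>0 < t\<close> by simp
  ultimately show ?thesis
    using prox_variational_inequality[OF c_convex, of "\<mu> * t" z w] by simp
qed

lemma prox_step_descent:
  assumes "0 < t" and d: "d = prox c (x - t *\<^sub>R gf x) (\<mu> * t) - x"
  shows "(norm d)^2 \<le> - t * Delta x d"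
proof -
  have "(- t *\<^sub>R gf x - d) \<bullet> (x - (x + d)) = t * (d \<bullet> gf x) + (norm d)^2"
    by (simp add: inner_diff_left inner_diff_right power2_norm_eq_inner inner_commute)
  then show ?thesis
    using prox_step_variational_inequality[OF assms, of x]
    unfolding Delta_def by (simp add: algebra_simps)
qed

lemma prox_step_error_bound:
  assumes "0 < t" and d: "d = prox c (x - t *\<^sub>R gf x) (\<mu> * t) - x"
    and min: "\<And>y. F xs \<le> F y"
  shows "F x - F xs \<le> (2 + 4 / (t * L')) * - Delta x d"
proof -
  have "(- t *\<^sub>R gf x - d) \<bullet> (xs - (x + d))
      = - t * (gf x \<bullet> (xs - x)) + t * (d \<bullet> gf x) - d \<bullet> (xs - x) + (norm d)^2"
    by (simp add: inner_diff_left inner_diff_right power2_norm_eq_inner inner_commute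
        algebra_simps)
  then have vi: "- t * (gf x \<bullet> (xs - x)) + t * (d \<bullet> gf x) - d \<bullet> (xs - x) + (norm d)^2
      \<le> \<mu> * t * (c xs - c (x + d))"
    using prox_step_variational_inequality[OF \<open>0 < t\<close> d, of xs] by simp
  have "f x + gf x \<bullet> (xs - x) + L'/2 * (norm (xs - x))^2 \<le> f xs"
    using strongly_monotone_gradient_lower_bound[OF f_grad gf_strongly_monotone, of x "xs - x"]
    by simp
  moreover have "0 \<le> L'/2 * (norm (xs - x))^2"
    using L'_pos by simp
  ultimately have "t * (f x + gf x \<bullet> (xs - x)) \<le> t * f xs"
    using \<open>0 < t\<close> by (intro mult_left_mono) auto
  moreover have "d \<bullet> (xs - x) \<le> norm (x - xs) * norm d"
    using norm_cauchy_schwarz[of d "xs - x"] by (simp add: norm_minus_commute mult.commute)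
  ultimately have "t * (F x - F xs) \<le> t * - Delta x d + norm (x - xs) * norm d"
    using vi unfolding F_def Delta_def
    by (simp add: algebra_simps) (use zero_le_power2[of "norm d"] in linarith)
  moreover have "(norm (x - xs))^2 \<le> 4 / L' * (F x - F xs)"
    using quadratic_growth[OF min, of x] L'_pos by (simp add: field_simps)
  moreover have "(norm d)^2 \<le> t * - Delta x d"
    using prox_step_descent[OF \<open>0 < t\<close> d] by simp
  ultimately show ?thesis
    by (rule error_bound_from_cross_term[OF \<open>0 < t\<close> L'_pos])
qed

lemma goldstein_step_decrease:
  assumes \<alpha>: "0 < \<alpha>" "\<alpha> \<le> 1" and "0 < \<theta>" "0 \<le> T" "d \<noteq> 0"
    and descent: "(norm d)^2 \<le> - T * Delta x d"
    and "F x \<le> R"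
    and goldstein: "\<theta> \<le> (F (x + \<alpha> *\<^sub>R d) - F x) / (\<alpha> * Delta x d)
        * \<bar>1 - (F (x + \<alpha> *\<^sub>R d) - R) / (\<alpha> * Delta x d)\<bar>"
    and curvature: "- (\<alpha>^2 / 2) * L * (norm d)^2 + \<alpha> * Delta x d \<le> F (x + \<alpha> *\<^sub>R d) - R"
  shows "F (x + \<alpha> *\<^sub>R d) \<le> F x + \<theta>^2 / (1 + L * T / 2)^3 * Delta x d"
proof -
  have "0 < (norm d)^2"
    using \<open>d \<noteq> 0\<close> by simp
  then have "0 < - T * Delta x d"
    using descent by linarith
  then have "Delta x d < 0"
    using \<open>0 \<le> T\<close> mult_nonneg_nonneg[of T "Delta x d"] by linarith
  have "F (x + \<alpha> *\<^sub>R d) - F x \<le> \<theta>^2 / (1 + L * T / 2)^3 * Delta x d"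
    by (rule goldstein_sufficient_decrease[OF \<alpha> \<open>0 < \<theta>\<close> \<open>0 \<le> T\<close> L_nonneg \<open>Delta x d < 0\<close>
          zero_le_power2 model_decrease[OF less_imp_le[OF \<alpha>(1)] \<alpha>(2)] descent _
          goldstein curvature])
      (use \<open>F x \<le> R\<close> in simp)
  then show ?thesis by simp
qed


lemma prox_gradient_step_bounds:
  assumes t: "\<tau>min \<le> t" "t \<le> \<tau>max" "0 < \<tau>min"
    and d: "d = prox c (x - t *\<^sub>R gf x) (\<mu> * t) - x" "d \<noteq> 0"
    and min: "\<And>y. F xs \<le> F y"
    and \<alpha>: "0 < \<alpha>" "\<alpha> \<le> 1" and "0 < \<theta>" and "F x \<le> R"
    and goldstein: "\<theta> \<le> (F (x + \<alpha> *\<^sub>R d) - F x) / (\<alpha> * Delta x d)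
        * \<bar>1 - (F (x + \<alpha> *\<^sub>R d) - R) / (\<alpha> * Delta x d)\<bar>"
    and curvature: "- (\<alpha>^2 / 2) * L * (norm d)^2 + \<alpha> * Delta x d \<le> F (x + \<alpha> *\<^sub>R d) - R"
  shows "(norm d)^2 \<le> \<tau>max * - Delta x d"
    and "F x - F xs \<le> (2 + 4 / (\<tau>min * L')) * - Delta x d"
    and "F (x + \<alpha> *\<^sub>R d) - F xs \<le> F x - F xs - \<theta>^2 / (1 + L * \<tau>max / 2)^3 * - Delta x d"
proof -
  have "0 < t" using t by linarith
  have descent: "(norm d)^2 \<le> t * - Delta x d"
    using prox_step_descent[OF \<open>0 < t\<close> d(1)] by simp
  moreover have "0 < (norm d)^2"
    using d(2) by simp
  ultimately have "0 < t * - Delta x d"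
    by linarith
  then have "0 < - Delta x d"
    using \<open>0 < t\<close> zero_less_mult_pos by blast
  then have "t * - Delta x d \<le> \<tau>max * - Delta x d"
    using t by (intro mult_right_mono) auto
  with descent show descent_max: "(norm d)^2 \<le> \<tau>max * - Delta x d"
    by linarith
  have "4 / (t * L') \<le> 4 / (\<tau>min * L')"
    using t L'_pos by (intro divide_left_mono mult_right_mono) auto
  then have "(2 + 4 / (t * L')) * - Delta x d \<le> (2 + 4 / (\<tau>min * L')) * - Delta x d"
    using \<open>0 < - Delta x d\<close> by (intro mult_right_mono) auto
  with prox_step_error_bound[OF \<open>0 < t\<close> d(1) min]
  show "F x - F xs \<le> (2 + 4 / (\<tau>min * L')) * - Delta x d"
    by linarith
  have "0 \<le> \<tau>max" using t by linarith
  with goldstein_step_decrease[OF \<alpha> \<open>0 < \<theta>\<close> _ d(2) _ \<open>F x \<le> R\<close> goldstein curvature] descent_max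
  show "F (x + \<alpha> *\<^sub>R d) - F xs \<le> F x - F xs - \<theta>^2 / (1 + L * \<tau>max / 2)^3 * - Delta x d"
    by simp
qed
end

theorem theorem3:
  fixes f c :: "'a::euclidean_space \<Rightarrow> real"
    and gf :: "'a \<Rightarrow> 'a"
    and \<mu> L L' \<theta> \<tau>min \<tau>max :: real
    and N :: nat and m :: "nat \<Rightarrow> nat"
    and x d :: "nat \<Rightarrow> 'a" and \<alpha> \<tau> \<eta> :: "nat \<Rightarrow> real"
    and xs :: 'a
  assumes mu_pos: "\<mu> > 0"
    and c_convex: "convex_on UNIV c"
    and f_grad: "\<And>y. (f has_derivative (\<lambda>h. gf y \<bullet> h)) (at y)"
    and gf_cont: "continuous_on UNIV gf"
    and gf_lip: "\<And>y z. norm (gf y - gf z) \<le> L * norm (y - z)"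
    and L'_pos: "L' > 0"
    and f_strong: "\<And>y z. (gf y - gf z) \<bullet> (y - z) \<ge> L' * (norm (y - z))^2"
    and theta_pos: "\<theta> > 0"
    and tau_min_pos: "0 < \<tau>min"
    and tau_bounds: "\<And>k. \<tau>min \<le> \<tau> k \<and> \<tau> k \<le> \<tau>max"
    and d_def: "\<And>k. d k = prox c (x k - \<tau> k *\<^sub>R gf (x k)) (\<mu> * \<tau> k) - x k"
    and d_nz: "\<And>k. d k \<noteq> 0"
    and x_step: "\<And>k. x (Suc k) = x k + \<alpha> k *\<^sub>R d k"
    and alpha_range: "\<And>k. 0 < \<alpha> k \<and> \<alpha> k \<le> 1"
    and N_pos: "N > 0"
    and m0: "m 0 = 0"
    and m_bound: "\<And>k. m (Suc k) \<le> min (m k + 1) (N - 1)"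
    and eta_range: "\<And>k. 0 \<le> \<eta> k \<and> \<eta> k \<le> 1"
    and goldstein: "\<And>k.
      let F = (\<lambda>y. f y + \<mu> * c y);
          Fs = (\<lambda>j. F (x j));
          R = \<eta> k * Fmax_ref Fs m k + (1 - \<eta> k) * Fs k;
          Dk = d k \<bullet> gf (x k) + \<mu> * (c (x k + d k) - c (x k));
          nu = (Fs (Suc k) - Fs k) / (\<alpha> k * Dk);
          lam = (Fs (Suc k) - R) / (\<alpha> k * Dk)
      in nu * \<bar>1 - lam\<bar> \<ge> \<theta>
         \<and> Fs (Suc k) - R \<ge> - ((\<alpha> k)^2 / 2) * L * (norm (d k))^2 + \<alpha> k * Dk"
    and x_lim: "x \<longlonglongrightarrow> xs"
    and xs_min: "\<And>y. f xs + \<mu> * c xs \<le> f y + \<mu> * c y"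
  shows "\<exists>q \<xi>1 \<xi>2 \<xi>3. 0 < q \<and> q < 1 \<and> \<xi>1 > 0 \<and> \<xi>2 > 0 \<and> \<xi>3 > 0 \<and>
           (\<forall>k. (f (x k) + \<mu> * c (x k)) - (f xs + \<mu> * c xs) \<le> \<xi>1 * q ^ (2 * k)
              \<and> norm (x k - xs) \<le> \<xi>2 * q ^ k
              \<and> norm (d k) \<le> \<xi>3 * q ^ k)"
proof -
  interpret composite_objective f c gf \<mu> L L'
    using mu_pos c_convex f_grad gf_lip L'_pos f_strong by unfold_locales auto
  define E where "E k = F (x k) - F xs" for k
  define D where "D k = - Delta (x k) (d k)" for k
  define R where "R k = \<eta> k * Fmax_ref (\<lambda>j. F (x j)) m k + (1 - \<eta> k) * F (x k)" for k
  have min: "F xs \<le> F y" for y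
    using xs_min unfolding F_def .
  have R_ge: "F (x k) \<le> R k" for k
    unfolding R_def using eta_range[of k] by (intro le_reference_value) auto
  have goldstein_k:
    "\<theta> \<le> (F (x k + \<alpha> k *\<^sub>R d k) - F (x k)) / (\<alpha> k * Delta (x k) (d k))
        * \<bar>1 - (F (x k + \<alpha> k *\<^sub>R d k) - R k) / (\<alpha> k * Delta (x k) (d k))\<bar>"
    "- ((\<alpha> k)^2 / 2) * L * (norm (d k))^2 + \<alpha> k * Delta (x k) (d k)
        \<le> F (x k + \<alpha> k *\<^sub>R d k) - R k" for k
    using goldstein[of k] unfolding Let_def F_def Delta_def R_def x_step by simp_all
  have step: "(norm (d k))^2 \<le> \<tau>max * D k"
      "E k \<le> (2 + 4 / (\<tau>min * L')) * D k"
      "E (Suc k) \<le> E k - \<theta>^2 / (1 + L * \<tau>max / 2)^3 * D k" for k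
    using prox_gradient_step_bounds[OF tau_bounds[of k, THEN conjunct1]
        tau_bounds[of k, THEN conjunct2] tau_min_pos d_def d_nz min
        alpha_range[of k, THEN conjunct1] alpha_range[of k, THEN conjunct2] theta_pos
        R_ge goldstein_k]
    unfolding E_def D_def x_step by auto
  have growth: "(norm (x k - xs))^2 \<le> 4 / L' * E k" for k
    using quadratic_growth[OF min, of "x k"] L'_pos unfolding E_def by (simp add: field_simps)
  have "0 < \<tau>max"
    using tau_bounds[of 0] tau_min_pos by linarith
  then show ?thesis
    using r_linear_rates_of_sufficient_decrease[of "\<theta>^2 / (1 + L * \<tau>max / 2)^3"
        "2 + 4 / (\<tau>min * L')" "4 / L'" \<tau>max E D "\<lambda>k. norm (x k - xs)" "\<lambda>k. norm (d k)"]
      step growth min theta_pos L'_pos tau_min_pos L_nonneg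
    unfolding E_def F_def by (simp add: add_pos_nonneg)
qed

end
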